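(* Let $N\ge 1$, $m_1,m_2>0$, $\varepsilon\in(0,1]$, $\alpha\in[0,1]$, and let $\delta,\gamma\in\mathbb{R}$ satisfy $$\frac{\frac{m_1}{m_2}\varepsilon-1}{1+\frac{m_1}{m_2}\varepsilon}\le\delta\le 1,\qquad 0\le\gamma\le\frac{m_1}{N}(1-\delta)\Big[\big(1+\tfrac{m_1}{m_2}\varepsilon\big)\delta+1-\tfrac{m_1}{m_2}\varepsilon\Big].$$ For every $q>N+2$ there is a constant $C_q>0$, independent of $f_1,f_2$, such that for every pair of functions $f_1,f_2:\mathbb{R}^N\to[0,\infty)$ with $(1+|v|^2)f_k\in L^1(\mathbb{R}^N)$ and $n_k>0$ ($k=1,2$), with the macroscopic quantities defined as in the context: (ii.1) $n_k(T_k+|u_k|^2)^{\frac{q-N}{2}}\le C_q N_q(f_k)$ for $k=1,2$; (ii.2) $n_1(T_{12}+|u_{12}|^2)^{\frac{q-N}{2}}\le C_q\big(N_q(f_1)+\frac{n_1}{n_2}N_q(f_2)\big)$; (ii.3) $n_2(T_{21}+|u_{21}|^2)^{\frac{q-N}{2}}\le C_q\big(\frac{n_2}{n_1}N_q(f_1)+N_q(f_2)\big)$.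
   Context: For $k=1,2$ define $n_k=\int f_k(v)\,dv$, $n_ku_k=\int v f_k(v)\,dv$, and $N n_k T_k=\int m_k|v-u_k|^2 f_k(v)\,dv$. Define the mixture quantities $u_{12}=\delta u_1+(1-\delta)u_2$, $u_{21}=u_2-\frac{m_1}{m_2}\varepsilon(1-\delta)(u_2-u_1)$, $T_{12}=\alpha T_1+(1-\alpha)T_2+\gamma|u_1-u_2|^2$, $T_{21}=\Big[\frac1N\varepsilon m_1(1-\delta)\big(\frac{m_1}{m_2}\varepsilon(\delta-1)+\delta+1\big)-\varepsilon\gamma\Big]|u_1-u_2|^2+\varepsilon(1-\alpha)T_1+(1-\varepsilon(1-\alpha))T_2$. For $q\ge 0$, $N_q(f_k)=\sup_v |v|^q f_k(v)$. *)

theory Defs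
  imports "HOL-Analysis.Analysis"
begin

text \<open>Velocity space R^N is modelled as real^'n, with N = CARD('n).\<close>

definition dens :: "(real^'n::finite \<Rightarrow> real) \<Rightarrow> real" where
  "dens f = (LINT v|lborel. f v)"

definition mvel :: "(real^'n::finite \<Rightarrow> real) \<Rightarrow> real^'n" where
  "mvel f = (1 / dens f) *\<^sub>R (LINT v|lborel. f v *\<^sub>R v)"

definition temp :: "real \<Rightarrow> (real^'n::finite \<Rightarrow> real) \<Rightarrow> real" where
  "temp m f = (LINT v|lborel. m * (norm (v - mvel f))\<^sup>2 * f v) / (real CARD('n) * dens f)"

definition Nq :: "real \<Rightarrow> (real^'n::finite \<Rightarrow> real) \<Rightarrow> ereal" where
  "Nq q f = (SUP v. ereal (norm v powr q * f v))"

definition u12 :: "real \<Rightarrow> real^'n::finite \<Rightarrow> real^'n \<Rightarrow> real^'n" where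
  "u12 \<delta> u1 u2 = \<delta> *\<^sub>R u1 + (1 - \<delta>) *\<^sub>R u2"

definition u21 :: "real \<Rightarrow> real \<Rightarrow> real \<Rightarrow> real \<Rightarrow> real^'n::finite \<Rightarrow> real^'n \<Rightarrow> real^'n" where
  "u21 m1 m2 \<epsilon> \<delta> u1 u2 = u2 - (m1 / m2 * \<epsilon> * (1 - \<delta>)) *\<^sub>R (u2 - u1)"

definition T12 :: "real \<Rightarrow> real \<Rightarrow> real \<Rightarrow> real \<Rightarrow> real^'n::finite \<Rightarrow> real^'n \<Rightarrow> real" where
  "T12 \<alpha> \<gamma> T1 T2 u1 u2 = \<alpha> * T1 + (1 - \<alpha>) * T2 + \<gamma> * (norm (u1 - u2))\<^sup>2"

definition T21 :: "real \<Rightarrow> real \<Rightarrow> real \<Rightarrow> real \<Rightarrow> real \<Rightarrow> real \<Rightarrow> real \<Rightarrow> real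
     \<Rightarrow> real^'n::finite \<Rightarrow> real^'n \<Rightarrow> real" where
  "T21 m1 m2 \<epsilon> \<delta> \<alpha> \<gamma> T1 T2 u1 u2 =
     ((1 / real CARD('n)) * \<epsilon> * m1 * (1 - \<delta>) * (m1 / m2 * \<epsilon> * (\<delta> - 1) + \<delta> + 1) - \<epsilon> * \<gamma>)
        * (norm (u1 - u2))\<^sup>2
     + \<epsilon> * (1 - \<alpha>) * T1 + (1 - \<epsilon> * (1 - \<alpha>)) * T2"

end

theory Submission
  imports Defs
begin

text \<open>For one species, split the energy \<open>\<integral> |v|^2 f\<close> at a radius \<open>R\<close>: inside the ball it is at
  most \<open>R^2 n\<close>, while outside \<open>|v|^2 f \<le> |v|^(2-q) N_q(f)\<close>, and covering the dyadic shells
  \<open>R 2^k \<le> |v| < R 2^(k+1)\<close> by balls bounds that part by a geometric series of order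
  \<open>R^(N+2-q) N_q(f)\<close>, convergent because \<open>q > N + 2\<close>. The radius with \<open>R^(q-N) = N_q(f) / n\<close>
  balances the two terms, and \<open>n (T + |u|^2)\<close> is at most a multiple of the energy; this gives (ii.1).
  The mixture quantities combine \<open>T_k\<close>, \<open>u_k\<close> and \<open>|u_1 - u_2|^2\<close> with bounded nonnegative
  coefficients (for \<open>T_21\<close> this is what the upper bound on \<open>\<gamma>\<close> ensures), so
  \<open>T_12 + |u_12|^2\<close> and \<open>T_21 + |u_21|^2\<close> are at most a constant times
  \<open>(T_1 + |u_1|^2) + (T_2 + |u_2|^2)\<close>, and (ii.2), (ii.3) follow from (ii.1).\<close>

definition dyadic_tail_const :: "real \<Rightarrow> nat \<Rightarrow> real" where
  "dyadic_tail_const q N = unit_ball_vol (real N) * 2 ^ N / (1 - 2 powr (real N + 2 - q))"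

lemma dyadic_tail_const_pos: "real N + 2 < q \<Longrightarrow> 0 < dyadic_tail_const q N"
  unfolding dyadic_tail_const_def by (intro divide_pos_pos mult_pos_pos) (auto intro!: powr_less_one)

lemma suminf_dyadic_ball_weights:
  fixes R q :: real and N :: nat
  assumes R: "0 < R" and q: "real N + 2 < q"
  shows "(\<Sum>k. ennreal ((R * 2 ^ k) powr (2 - q) * (unit_ball_vol (real N) * (R * 2 ^ Suc k) ^ N)))
     = ennreal (dyadic_tail_const q N * R powr (real N + 2 - q))"
proof -
  define s where "s = 2 powr (real N + 2 - q)"
  define c where "c = unit_ball_vol (real N) * 2 ^ N * R powr (real N + 2 - q)"
  have s: "0 < s" "s < 1" using q by (auto simp: s_def intro!: powr_less_one)
  have summand: "(R * 2 ^ k) powr (2 - q) * (unit_ball_vol (real N) * (R * 2 ^ Suc k) ^ N) = c * s ^ k" for k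
  proof -
    have "(R * 2 ^ k) powr (2 - q) * (R * 2 ^ Suc k) ^ N
        = 2 ^ N * (R powr (2 - q) * R powr N) * ((2 powr (2 - q)) ^ k * (2 powr N) ^ k)"
      using R by (simp add: powr_mult powr_powr power_mult_distrib mult_ac
          flip: powr_realpow power_mult)
    also have "R powr (2 - q) * R powr N = R powr (real N + 2 - q)"
      by (simp add: powr_add[symmetric] algebra_simps)
    also have "(2 powr (2 - q)) ^ k * (2 powr N) ^ k = s ^ k"
      by (simp add: s_def power_mult_distrib[symmetric] powr_add[symmetric] algebra_simps)
    finally show ?thesis by (simp add: c_def mult_ac)
  qed
  have "(\<Sum>k. ennreal (c * s ^ k)) = ennreal (\<Sum>k. c * s ^ k)"
    using s R by (intro suminf_ennreal2) (auto simp: c_def intro!: summable_mult summable_geometric)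
  also have "(\<Sum>k. c * s ^ k) = c / (1 - s)"
    using s by (simp add: suminf_mult summable_geometric suminf_geometric)
  finally show ?thesis unfolding summand by (simp add: c_def s_def dyadic_tail_const_def)
qed

lemma dyadic_shell_index:
  fixes R x :: real
  assumes R: "0 < R" and x: "R \<le> x"
  obtains k :: nat where "R * 2 ^ k \<le> x" "x < R * 2 ^ Suc k"
proof -
  define k where "k = nat \<lfloor>log 2 (x / R)\<rfloor>"
  have "1 \<le> x / R" using R x by simp
  then have "2 powr k \<le> x / R \<and> x / R < 2 powr (k + 1)"
    using floor_log_eq_powr_iff[of "x / R" 2 "\<lfloor>log 2 (x / R)\<rfloor>"] by (simp add: k_def add.commute)
  then have "R * 2 ^ k \<le> x" "x < R * 2 ^ Suc k"
    using R by (simp_all add: powr_realpow field_simps flip: of_nat_Suc)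
  then show ?thesis by (rule that)
qed

lemma nn_integral_norm_sq_le:
  fixes f :: "'a::euclidean_space \<Rightarrow> real" and q M R :: real
  assumes f0: "\<And>v. 0 \<le> f v" and [measurable]: "f \<in> borel_measurable lborel"
    and bound: "\<And>v. norm v powr q * f v \<le> M" and q: "real DIM('a) + 2 < q" and R: "0 < R"
  shows "(\<integral>\<^sup>+v. ennreal ((norm v)\<^sup>2 * f v) \<partial>lborel)
     \<le> ennreal (R\<^sup>2) * (\<integral>\<^sup>+v. ennreal (f v) \<partial>lborel)
       + ennreal (M * dyadic_tail_const q DIM('a) * R powr (real DIM('a) + 2 - q))"
proof -
  have M: "0 \<le> M" using bound[of 0] by simp
  define g where "g k v = ennreal ((R * 2 ^ k) powr (2 - q)) * indicator (ball (0::'a) (R * 2 ^ Suc k)) v" for k v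
  have [measurable]: "g k \<in> borel_measurable lborel" for k
    unfolding g_def by (intro borel_measurable_times_ennreal borel_measurable_indicator) auto
  have pointwise: "ennreal ((norm v)\<^sup>2 * f v) \<le> ennreal (R\<^sup>2) * ennreal (f v) + ennreal M * (\<Sum>k. g k v)" for v
  proof (cases "norm v < R")
    case True
    then have "(norm v)\<^sup>2 * f v \<le> R\<^sup>2 * f v"
      using f0[of v] by (intro mult_right_mono power_mono) auto
    then have "ennreal ((norm v)\<^sup>2 * f v) \<le> ennreal (R\<^sup>2) * ennreal (f v)"
      using f0[of v] by (simp add: ennreal_leI flip: ennreal_mult)
    then show ?thesis by (rule add_increasing2[rotated]) simp
  next
    case False
    then have "R \<le> norm v" by simp
    then obtain k where k: "R * 2 ^ k \<le> norm v" "norm v < R * 2 ^ Suc k"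
      by (rule dyadic_shell_index[OF R])
    have "(norm v)\<^sup>2 * f v = norm v powr (2 - q) * (norm v powr q * f v)"
      using R False by (simp add: mult.assoc powr_numeral flip: powr_add)
    also have "\<dots> \<le> (R * 2 ^ k) powr (2 - q) * M"
      using q R k f0[of v] by (intro mult_mono bound powr_mono2') auto
    finally have "ennreal ((norm v)\<^sup>2 * f v) \<le> ennreal M * g k v"
      using k M by (simp add: g_def ennreal_leI mult.commute flip: ennreal_mult)
    also have "g k v \<le> (\<Sum>k. g k v)"
      using sum_le_suminf[of "\<lambda>k. g k v" "{k}"] by (simp add: summableI)
    finally show ?thesis
      by (rule order_trans) (auto intro: add_increasing mult_left_mono)
  qed
  have "(\<integral>\<^sup>+v. ennreal ((norm v)\<^sup>2 * f v) \<partial>lborel)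
     \<le> (\<integral>\<^sup>+v. ennreal (R\<^sup>2) * ennreal (f v) + ennreal M * (\<Sum>k. g k v) \<partial>lborel)"
    by (intro nn_integral_mono pointwise)
  also have "\<dots> = ennreal (R\<^sup>2) * (\<integral>\<^sup>+v. ennreal (f v) \<partial>lborel)
      + ennreal M * (\<Sum>k. \<integral>\<^sup>+v. g k v \<partial>lborel)"
    by (simp add: nn_integral_add nn_integral_cmult nn_integral_suminf)
  also have "(\<lambda>k. \<integral>\<^sup>+v. g k v \<partial>lborel)
      = (\<lambda>k. ennreal ((R * 2 ^ k) powr (2 - q) * (unit_ball_vol (real DIM('a)) * (R * 2 ^ Suc k) ^ DIM('a))))"
    using R by (auto simp: g_def nn_integral_cmult_indicator emeasure_ball ennreal_mult' simp del: power_Suc)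
  also have "(\<Sum>k. \<dots> k) = ennreal (dyadic_tail_const q DIM('a) * R powr (real DIM('a) + 2 - q))"
    by (rule suminf_dyadic_ball_weights[OF R q])
  finally show ?thesis using M by (simp add: ennreal_mult' mult.assoc)
qed

lemma integrable_moments:
  fixes f :: "'a::euclidean_space \<Rightarrow> real"
  assumes f0: "\<And>v. 0 \<le> f v" and fi: "integrable lborel (\<lambda>v. (1 + (norm v)\<^sup>2) * f v)"
  shows "f \<in> borel_measurable lborel" "integrable lborel f"
    "integrable lborel (\<lambda>v. (norm v)\<^sup>2 * f v)" "integrable lborel (\<lambda>v. f v *\<^sub>R v)"
proof -
  have weight_pos: "0 < 1 + (norm v)\<^sup>2" for v :: 'a
    by (simp add: add_pos_nonneg)
  have "(\<lambda>v. ((1 + (norm v)\<^sup>2) * f v) / (1 + (norm v)\<^sup>2)) \<in> borel_measurable lborel"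
    using borel_measurable_integrable[OF fi] by measurable
  then show fm: "f \<in> borel_measurable lborel"
    using weight_pos by (simp add: less_imp_neq[symmetric])
  have norm_le: "norm v \<le> 1 + (norm v)\<^sup>2" for v :: 'a
  proof -
    have "2 * norm v \<le> 1 + (norm v)\<^sup>2"
      using zero_le_power2[of "norm v - 1"] by (simp add: power2_eq_square algebra_simps)
    then show ?thesis using norm_ge_zero[of v] by linarith
  qed
  show "integrable lborel f"
    using fm f0 mult_right_mono[of 1 "1 + (norm _)\<^sup>2" "f _"]
    by (intro Bochner_Integration.integrable_bound[OF fi]) (auto intro!: AE_I2)
  show "integrable lborel (\<lambda>v. (norm v)\<^sup>2 * f v)"
    using fm f0 by (intro Bochner_Integration.integrable_bound[OF fi]) (auto intro!: AE_I2 mult_right_mono)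
  show "integrable lborel (\<lambda>v. f v *\<^sub>R v)"
    using fm f0 mult_right_mono[OF norm_le f0]
    by (intro Bochner_Integration.integrable_bound[OF fi]) (auto simp: mult.commute intro!: AE_I2)
qed

lemma integral_norm_sq_le:
  fixes f :: "'a::euclidean_space \<Rightarrow> real" and q M R :: real
  assumes f0: "\<And>v. 0 \<le> f v" and fi: "integrable lborel (\<lambda>v. (1 + (norm v)\<^sup>2) * f v)"
    and bound: "\<And>v. norm v powr q * f v \<le> M" and q: "real DIM('a) + 2 < q" and R: "0 < R"
  shows "(LINT v|lborel. (norm v)\<^sup>2 * f v)
     \<le> R\<^sup>2 * (LINT v|lborel. f v) + M * dyadic_tail_const q DIM('a) * R powr (real DIM('a) + 2 - q)"
proof -
  note I = integrable_moments[OF f0 fi]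
  have M: "0 \<le> M" using bound[of 0] by simp
  have K: "0 < dyadic_tail_const q DIM('a)" using q by (rule dyadic_tail_const_pos)
  have mass: "0 \<le> (LINT v|lborel. f v)" using f0 by (simp add: integral_nonneg)
  have "ennreal (LINT v|lborel. (norm v)\<^sup>2 * f v) = (\<integral>\<^sup>+v. ennreal ((norm v)\<^sup>2 * f v) \<partial>lborel)"
    using I(3) f0 by (simp add: nn_integral_eq_integral)
  also have "\<dots> \<le> ennreal (R\<^sup>2) * (\<integral>\<^sup>+v. ennreal (f v) \<partial>lborel)
       + ennreal (M * dyadic_tail_const q DIM('a) * R powr (real DIM('a) + 2 - q))"
    by (rule nn_integral_norm_sq_le[OF f0 I(1) bound q R])
  also have "(\<integral>\<^sup>+v. ennreal (f v) \<partial>lborel) = ennreal (LINT v|lborel. f v)"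
    using I(2) f0 by (simp add: nn_integral_eq_integral)
  also have "ennreal (R\<^sup>2) * ennreal (LINT v|lborel. f v) + ennreal (M * dyadic_tail_const q DIM('a) * R powr (real DIM('a) + 2 - q))
      = ennreal (R\<^sup>2 * (LINT v|lborel. f v) + M * dyadic_tail_const q DIM('a) * R powr (real DIM('a) + 2 - q))"
    using mass M K by (simp add: ennreal_plus ennreal_mult)
  finally show ?thesis
    using mass M K by (subst (asm) ennreal_le_iff) auto
qed

lemma le_at_balanced_scale:
  fixes E n M K p :: real
  assumes n: "0 < n" and M: "0 < M" and p: "0 < p"
    and bound: "\<And>R. 0 < R \<Longrightarrow> E \<le> R\<^sup>2 * n + M * K * R powr (2 - p)"
  shows "E \<le> (1 + K) * n * (M / n) powr (2 / p)"
proof -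
  define R where "R = (M / n) powr (1 / p)"
  have R: "0 < R" using n M by (simp add: R_def)
  have R_p: "R powr p = M / n"
    using n M p by (simp add: R_def powr_powr)
  have R_sq: "R\<^sup>2 = (M / n) powr (2 / p)"
    using R by (simp add: R_def powr_powr flip: powr_numeral)
  have "M * R powr (2 - p) = n * R\<^sup>2"
    using n M R by (simp add: powr_diff R_p powr_numeral)
  then show ?thesis
    using bound[OF R] by (simp add: R_sq algebra_simps)
qed

lemma second_moment_decomposition:
  fixes f :: "real^'n::finite \<Rightarrow> real"
  assumes f0: "\<And>v. 0 \<le> f v" and fi: "integrable lborel (\<lambda>v. (1 + (norm v)\<^sup>2) * f v)"
    and n: "dens f \<noteq> 0"
  shows "(LINT v|lborel. (norm (v - mvel f))\<^sup>2 * f v)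
     = (LINT v|lborel. (norm v)\<^sup>2 * f v) - dens f * (norm (mvel f))\<^sup>2"
proof -
  note I = integrable_moments[OF f0 fi]
  define u where "u = mvel f"
  have momentum: "(LINT v|lborel. f v *\<^sub>R v) = dens f *\<^sub>R u"
    using n by (simp add: u_def mvel_def)
  have "(norm (v - u))\<^sup>2 * f v = (norm v)\<^sup>2 * f v - 2 * ((f v *\<^sub>R v) \<bullet> u) + (norm u)\<^sup>2 * f v" for v
    by (simp add: power2_norm_eq_inner inner_diff_left inner_diff_right inner_commute algebra_simps)
  then have "(LINT v|lborel. (norm (v - u))\<^sup>2 * f v)
      = (LINT v|lborel. (norm v)\<^sup>2 * f v) - 2 * ((LINT v|lborel. f v *\<^sub>R v) \<bullet> u) + (norm u)\<^sup>2 * dens f"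
    using I by (simp del: inner_scaleR_left add: dens_def)
  then show ?thesis
    by (simp add: momentum u_def power2_norm_eq_inner)
qed

lemma temp_nonneg: "0 \<le> m \<Longrightarrow> (\<And>v. 0 \<le> f v) \<Longrightarrow> 0 \<le> temp m f"
  unfolding temp_def dens_def by (intro divide_nonneg_nonneg integral_nonneg mult_nonneg_nonneg) auto

lemma dens_energy_le:
  fixes f :: "real^'n::finite \<Rightarrow> real" and m c :: real
  assumes f0: "\<And>v. 0 \<le> f v" and fi: "integrable lborel (\<lambda>v. (1 + (norm v)\<^sup>2) * f v)"
    and n: "0 < dens f" and c: "m / real CARD('n) \<le> c" "1 \<le> c"
  shows "dens f * (temp m f + (norm (mvel f))\<^sup>2) \<le> c * (LINT v|lborel. (norm v)\<^sup>2 * f v)"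
proof -
  define E where "E = (LINT v|lborel. (norm v)\<^sup>2 * f v)"
  define P where "P = dens f * (norm (mvel f))\<^sup>2"
  have thermal: "(LINT v|lborel. (norm (v - mvel f))\<^sup>2 * f v) = E - P"
    using second_moment_decomposition[OF f0 fi] n by (simp add: E_def P_def)
  have "0 \<le> E - P"
    unfolding thermal[symmetric] using f0 by (simp add: integral_nonneg)
  then have "m / real CARD('n) * (E - P) \<le> c * (E - P)"
    using c(1) by (intro mult_right_mono)
  moreover have "P \<le> c * P"
    using mult_right_mono[OF c(2), of P] n by (simp add: P_def)
  moreover have "dens f * temp m f = m / real CARD('n) * (E - P)"
    using n by (simp add: temp_def mult.assoc thermal)
  ultimately have "dens f * temp m f + P \<le> c * (E - P) + c * P"
    by linarith
  then show ?thesis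
    by (simp add: E_def P_def algebra_simps)
qed

lemma weighted_sup_bound_pos:
  fixes f :: "'a::euclidean_space \<Rightarrow> real"
  assumes f0: "\<And>v. 0 \<le> f v" and mass: "0 < (LINT v|lborel. f v)"
    and bound: "\<And>v. norm v powr q * f v \<le> M"
  shows "0 < M"
proof (rule ccontr)
  assume "\<not> 0 < M"
  then have "f v = 0" if "v \<noteq> 0" for v
    using bound[of v] f0[of v] that by (smt (verit) powr_gt_zero zero_less_mult_iff zero_less_norm_iff)
  then have "AE v in lborel. f v = 0"
    by (auto intro: eventually_mono[OF AE_lborel_singleton[of 0]])
  then show False
    using mass by (simp add: integral_eq_zero_AE)
qed

lemma species_energy_bound:
  fixes f :: "real^'n::finite \<Rightarrow> real" and m c q M :: real
  defines "e \<equiv> (q - real CARD('n)) / 2"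
  assumes f0: "\<And>v. 0 \<le> f v" and fi: "integrable lborel (\<lambda>v. (1 + (norm v)\<^sup>2) * f v)"
    and n: "0 < dens f" and m: "0 \<le> m" and c: "m / real CARD('n) \<le> c" "1 \<le> c"
    and q: "real CARD('n) + 2 < q" and bound: "\<And>v. norm v powr q * f v \<le> M"
  shows "dens f * (temp m f + (norm (mvel f))\<^sup>2) powr e
     \<le> (c * (1 + dyadic_tail_const q CARD('n))) powr e * M"
proof -
  define n where "n = dens f"
  define X where "X = temp m f + (norm (mvel f))\<^sup>2"
  define K where "K = dyadic_tail_const q CARD('n)"
  have e: "0 < e" using q by (simp add: e_def)
  have M: "0 < M" using weighted_sup_bound_pos[OF f0 _ bound] n by (simp add: dens_def)
  have "(LINT v|lborel. (norm v)\<^sup>2 * f v) \<le> (1 + K) * n * (M / n) powr (2 / (q - CARD('n)))"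
    using integral_norm_sq_le[OF f0 fi bound] q n M
    by (intro le_at_balanced_scale) (auto simp: K_def n_def dens_def algebra_simps)
  then have "c * (LINT v|lborel. (norm v)\<^sup>2 * f v) \<le> c * ((1 + K) * n * (M / n) powr (1 / e))"
    using c by (intro mult_left_mono) (auto simp: e_def)
  then have "n * X \<le> n * (c * (1 + K) * (M / n) powr (1 / e))"
    using dens_energy_le[OF f0 fi n c] by (simp add: n_def X_def algebra_simps)
  then have "X \<le> c * (1 + K) * (M / n) powr (1 / e)"
    using n by (simp add: n_def)
  then have "X powr e \<le> (c * (1 + K) * (M / n) powr (1 / e)) powr e"
    using e temp_nonneg[of m f] m f0 by (intro powr_mono2) (auto simp: X_def)
  also have "\<dots> = (c * (1 + K)) powr e * (M / n)"
    using e c M n dyadic_tail_const_pos[OF q] by (simp add: K_def n_def powr_mult powr_powr)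
  finally show ?thesis
    using n by (simp add: n_def X_def K_def field_simps)
qed

lemma Nq_ge: "ereal (norm v powr q * f v) \<le> Nq q f"
  unfolding Nq_def by (rule SUP_upper) simp

lemma species_energy_bound_Nq:
  fixes f :: "real^'n::finite \<Rightarrow> real" and m c q :: real
  defines "e \<equiv> (q - real CARD('n)) / 2"
  assumes f0: "\<And>v. 0 \<le> f v" and fi: "integrable lborel (\<lambda>v. (1 + (norm v)\<^sup>2) * f v)"
    and n: "0 < dens f" and m: "0 \<le> m" and c: "m / real CARD('n) \<le> c" "1 \<le> c"
    and q: "real CARD('n) + 2 < q"
  shows "ereal (dens f * (temp m f + (norm (mvel f))\<^sup>2) powr e)
     \<le> ereal ((c * (1 + dyadic_tail_const q CARD('n))) powr e) * Nq q f"
proof (cases "Nq q f")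
  case (real M)
  then have "norm v powr q * f v \<le> M" for v
    using Nq_ge[of v q f] by simp
  then show ?thesis
    using species_energy_bound[OF f0 fi n m c q] real by (simp add: e_def)
next
  case PInf
  then show ?thesis
    using c dyadic_tail_const_pos[OF q] by simp
next
  case MInf
  then show ?thesis
    using Nq_ge[of 0 q f] by simp
qed

lemma norm_add_sq_le:
  fixes x y :: "'a::real_normed_vector"
  shows "(norm (x + y))\<^sup>2 \<le> 2 * (norm x)\<^sup>2 + 2 * (norm y)\<^sup>2"
proof -
  have "(norm (x + y))\<^sup>2 \<le> (norm x + norm y)\<^sup>2"
    by (intro power_mono norm_triangle_ineq) simp
  also have "\<dots> \<le> 2 * (norm x)\<^sup>2 + 2 * (norm y)\<^sup>2"
    using zero_le_power2[of "norm x - norm y"] by (simp add: power2_diff power2_sum)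
  finally show ?thesis .
qed

lemma mixture_energy_le:
  fixes u1 u2 :: "'a::real_normed_vector" and T1 T2 a b g d A :: real
  assumes T: "0 \<le> T1" "0 \<le> T2" and a: "0 \<le> a" "a \<le> 1" and b: "0 \<le> b" "b \<le> 1" and g: "0 \<le> g"
    and A: "1 + 2 * g + 2 * d\<^sup>2 + 2 * (1 - d)\<^sup>2 \<le> A"
  shows "a * T1 + b * T2 + g * (norm (u1 - u2))\<^sup>2 + (norm (d *\<^sub>R u1 + (1 - d) *\<^sub>R u2))\<^sup>2
     \<le> A * ((T1 + (norm u1)\<^sup>2) + (T2 + (norm u2)\<^sup>2))"
proof -
  have sq: "0 \<le> d\<^sup>2" "0 \<le> (1 - d)\<^sup>2" by simp_all
  have A_ge: "1 \<le> A" "2 * g + 2 * d\<^sup>2 \<le> A" "2 * g + 2 * (1 - d)\<^sup>2 \<le> A"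
    using A g sq by linarith+
  have "a * T1 \<le> A * T1" "b * T2 \<le> A * T2"
    using T a b A_ge by (auto intro!: mult_right_mono)
  moreover have "g * (norm (u1 - u2))\<^sup>2 \<le> g * (2 * (norm u1)\<^sup>2 + 2 * (norm u2)\<^sup>2)"
    using norm_add_sq_le[of u1 "- u2"] g by (intro mult_left_mono) auto
  moreover have "(norm (d *\<^sub>R u1 + (1 - d) *\<^sub>R u2))\<^sup>2 \<le> 2 * d\<^sup>2 * (norm u1)\<^sup>2 + 2 * (1 - d)\<^sup>2 * (norm u2)\<^sup>2"
    using norm_add_sq_le[of "d *\<^sub>R u1" "(1 - d) *\<^sub>R u2"] by (simp add: power_mult_distrib)
  moreover have "(2 * g + 2 * d\<^sup>2) * (norm u1)\<^sup>2 \<le> A * (norm u1)\<^sup>2"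
    "(2 * g + 2 * (1 - d)\<^sup>2) * (norm u2)\<^sup>2 \<le> A * (norm u2)\<^sup>2"
    using A_ge by (auto intro!: mult_right_mono)
  ultimately show ?thesis
    by (simp add: algebra_simps)
qed

lemma T12_energy_bounds:
  fixes \<alpha> \<gamma> \<delta> T1 T2 A :: real and u1 u2 :: "real^'n::finite"
  assumes T: "0 \<le> T1" "0 \<le> T2" and \<alpha>: "0 \<le> \<alpha>" "\<alpha> \<le> 1" and \<gamma>: "0 \<le> \<gamma>"
    and A: "1 + 2 * \<gamma> + 2 * \<delta>\<^sup>2 + 2 * (1 - \<delta>)\<^sup>2 \<le> A"
  shows "0 \<le> T12 \<alpha> \<gamma> T1 T2 u1 u2 + (norm (u12 \<delta> u1 u2))\<^sup>2"
    "T12 \<alpha> \<gamma> T1 T2 u1 u2 + (norm (u12 \<delta> u1 u2))\<^sup>2 \<le> A * ((T1 + (norm u1)\<^sup>2) + (T2 + (norm u2)\<^sup>2))"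
  using mixture_energy_le[OF T \<alpha> _ _ \<gamma> A, of "1 - \<alpha>" u1 u2] T \<alpha> \<gamma>
  by (auto simp: T12_def u12_def)

lemma T21_coeff_nonneg:
  fixes N m1 r \<epsilon> \<delta> \<gamma> :: real
  assumes "0 < \<epsilon>" and "\<gamma> \<le> m1 / N * (1 - \<delta>) * ((1 + r) * \<delta> + 1 - r)"
  shows "0 \<le> (1 / N) * \<epsilon> * m1 * (1 - \<delta>) * (r * (\<delta> - 1) + \<delta> + 1) - \<epsilon> * \<gamma>"
proof -
  have "(1 / N) * \<epsilon> * m1 * (1 - \<delta>) * (r * (\<delta> - 1) + \<delta> + 1) - \<epsilon> * \<gamma>
      = \<epsilon> * (m1 / N * (1 - \<delta>) * ((1 + r) * \<delta> + 1 - r) - \<gamma>)"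
    unfolding divide_inverse by (simp add: algebra_simps)
  then show ?thesis
    using assms by simp
qed

lemma T21_energy_bounds:
  fixes m1 m2 \<epsilon> \<delta> \<alpha> \<gamma> T1 T2 A :: real and u1 u2 :: "real^'n::finite"
  defines "g \<equiv> (1 / real CARD('n)) * \<epsilon> * m1 * (1 - \<delta>) * (m1 / m2 * \<epsilon> * (\<delta> - 1) + \<delta> + 1) - \<epsilon> * \<gamma>"
    and "b \<equiv> m1 / m2 * \<epsilon> * (1 - \<delta>)"
  assumes T: "0 \<le> T1" "0 \<le> T2" and \<alpha>: "0 \<le> \<alpha>" "\<alpha> \<le> 1" and \<epsilon>: "0 \<le> \<epsilon>" "\<epsilon> \<le> 1"
    and g: "0 \<le> g" and A: "1 + 2 * g + 2 * b\<^sup>2 + 2 * (1 - b)\<^sup>2 \<le> A"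
  shows "0 \<le> T21 m1 m2 \<epsilon> \<delta> \<alpha> \<gamma> T1 T2 u1 u2 + (norm (u21 m1 m2 \<epsilon> \<delta> u1 u2))\<^sup>2"
    "T21 m1 m2 \<epsilon> \<delta> \<alpha> \<gamma> T1 T2 u1 u2 + (norm (u21 m1 m2 \<epsilon> \<delta> u1 u2))\<^sup>2
       \<le> A * ((T1 + (norm u1)\<^sup>2) + (T2 + (norm u2)\<^sup>2))"
proof -
  have T21_eq: "T21 m1 m2 \<epsilon> \<delta> \<alpha> \<gamma> T1 T2 u1 u2
      = \<epsilon> * (1 - \<alpha>) * T1 + (1 - \<epsilon> * (1 - \<alpha>)) * T2 + g * (norm (u1 - u2))\<^sup>2"
    by (simp add: T21_def g_def)
  have u21_eq: "u21 m1 m2 \<epsilon> \<delta> u1 u2 = b *\<^sub>R u1 + (1 - b) *\<^sub>R u2"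
    by (simp add: u21_def b_def algebra_simps)
  have c: "0 \<le> \<epsilon> * (1 - \<alpha>)" "\<epsilon> * (1 - \<alpha>) \<le> 1"
    using \<epsilon> \<alpha> by (auto intro: mult_le_one)
  show "0 \<le> T21 m1 m2 \<epsilon> \<delta> \<alpha> \<gamma> T1 T2 u1 u2 + (norm (u21 m1 m2 \<epsilon> \<delta> u1 u2))\<^sup>2"
    unfolding T21_eq using T c g by simp
  show "T21 m1 m2 \<epsilon> \<delta> \<alpha> \<gamma> T1 T2 u1 u2 + (norm (u21 m1 m2 \<epsilon> \<delta> u1 u2))\<^sup>2
       \<le> A * ((T1 + (norm u1)\<^sup>2) + (T2 + (norm u2)\<^sup>2))"
    unfolding T21_eq u21_eq by (rule mixture_energy_le[OF T c _ _ g A]) (use c in auto)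
qed

lemma powr_of_sum_le:
  fixes x y e :: real
  assumes "0 \<le> x" "0 \<le> y" "0 \<le> e"
  shows "(x + y) powr e \<le> 2 powr e * (x powr e + y powr e)"
proof -
  have "(x + y) powr e \<le> (2 * max x y) powr e"
    using assms by (intro powr_mono2) auto
  also have "\<dots> = 2 powr e * max x y powr e"
    using assms by (simp add: powr_mult)
  also have "max x y powr e \<le> x powr e + y powr e"
    by (simp add: max_def)
  finally show ?thesis by simp
qed

lemma ereal_mixture_bound:
  fixes n1 n2 X1 X2 Y A C e :: real and M1 M2 :: ereal
  assumes n: "0 < n1" "0 < n2" and X: "0 \<le> X1" "0 \<le> X2" and Y: "0 \<le> Y" "Y \<le> A * (X1 + X2)"
    and A: "0 < A" and e: "0 \<le> e" and C: "0 < C" and M: "0 \<le> M1" "0 \<le> M2"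
    and bound1: "ereal (n1 * X1 powr e) \<le> ereal C * M1"
    and bound2: "ereal (n2 * X2 powr e) \<le> ereal C * M2"
  shows "ereal (n1 * Y powr e) \<le> ereal ((2 * A) powr e * C) * (M1 + ereal (n1 / n2) * M2)"
proof (cases "M1 = \<infinity> \<or> M2 = \<infinity>")
  case True
  then show ?thesis using M n A C by auto
next
  case False
  then obtain m1 m2 where m: "M1 = ereal m1" "M2 = ereal m2"
    using M by (cases M1; cases M2) auto
  have "Y powr e \<le> (A * (X1 + X2)) powr e"
    using Y e by (intro powr_mono2) auto
  also have "\<dots> \<le> (2 * A) powr e * (X1 powr e + X2 powr e)"
    using A X e powr_of_sum_le[OF X e] by (simp add: powr_mult mult.assoc)
  finally have "n1 * Y powr e \<le> n1 * ((2 * A) powr e * (X1 powr e + X2 powr e))"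
    using n by (intro mult_left_mono) auto
  also have "\<dots> = (2 * A) powr e * (n1 * X1 powr e + n1 / n2 * (n2 * X2 powr e))"
    using n by (simp add: algebra_simps)
  also have "\<dots> \<le> (2 * A) powr e * (C * m1 + n1 / n2 * (C * m2))"
    using bound1 bound2 m n by (intro mult_left_mono add_mono) auto
  finally show ?thesis
    using m by (simp add: algebra_simps)
qed

lemma two_species_energy_bounds:
  fixes m1 m2 \<epsilon> \<alpha> \<delta> \<gamma> q A c :: real and f1 f2 :: "real^'n::finite \<Rightarrow> real"
  defines "g \<equiv> (1 / real CARD('n)) * \<epsilon> * m1 * (1 - \<delta>) * (m1 / m2 * \<epsilon> * (\<delta> - 1) + \<delta> + 1) - \<epsilon> * \<gamma>"
    and "b \<equiv> m1 / m2 * \<epsilon> * (1 - \<delta>)"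
    and "e \<equiv> (q - real CARD('n)) / 2"
    and "C0 \<equiv> (c * (1 + dyadic_tail_const q CARD('n))) powr ((q - real CARD('n)) / 2)"
  assumes f1: "\<And>v. 0 \<le> f1 v" "integrable lborel (\<lambda>v. (1 + (norm v)\<^sup>2) * f1 v)" "0 < dens f1"
    and f2: "\<And>v. 0 \<le> f2 v" "integrable lborel (\<lambda>v. (1 + (norm v)\<^sup>2) * f2 v)" "0 < dens f2"
    and m: "0 < m1" "0 < m2" and c: "1 \<le> c" "m1 / real CARD('n) \<le> c" "m2 / real CARD('n) \<le> c"
    and q: "real CARD('n) + 2 < q"
    and \<alpha>: "0 \<le> \<alpha>" "\<alpha> \<le> 1" and \<epsilon>: "0 \<le> \<epsilon>" "\<epsilon> \<le> 1" and \<gamma>: "0 \<le> \<gamma>" and g: "0 \<le> g"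
    and A12: "1 + 2 * \<gamma> + 2 * \<delta>\<^sup>2 + 2 * (1 - \<delta>)\<^sup>2 \<le> A"
    and A21: "1 + 2 * g + 2 * b\<^sup>2 + 2 * (1 - b)\<^sup>2 \<le> A"
  shows "ereal (dens f1 * (temp m1 f1 + (norm (mvel f1))\<^sup>2) powr e) \<le> ereal ((2 * A) powr e * C0) * Nq q f1"
    and "ereal (dens f2 * (temp m2 f2 + (norm (mvel f2))\<^sup>2) powr e) \<le> ereal ((2 * A) powr e * C0) * Nq q f2"
    and "ereal (dens f1 * (T12 \<alpha> \<gamma> (temp m1 f1) (temp m2 f2) (mvel f1) (mvel f2)
            + (norm (u12 \<delta> (mvel f1) (mvel f2)))\<^sup>2) powr e)
          \<le> ereal ((2 * A) powr e * C0) * (Nq q f1 + ereal (dens f1 / dens f2) * Nq q f2)"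
    and "ereal (dens f2 * (T21 m1 m2 \<epsilon> \<delta> \<alpha> \<gamma> (temp m1 f1) (temp m2 f2) (mvel f1) (mvel f2)
            + (norm (u21 m1 m2 \<epsilon> \<delta> (mvel f1) (mvel f2)))\<^sup>2) powr e)
          \<le> ereal ((2 * A) powr e * C0) * (ereal (dens f2 / dens f1) * Nq q f1 + Nq q f2)"
proof -
  have e: "0 \<le> e" using q by (simp add: e_def)
  have A_ge: "1 \<le> A"
    using A12 \<gamma> zero_le_power2[of \<delta>] zero_le_power2[of "1 - \<delta>"] by linarith
  then have A: "0 < A" by simp
  have C0: "0 < C0" using c dyadic_tail_const_pos[OF q] by (simp add: C0_def)
  have T: "0 \<le> temp m1 f1" "0 \<le> temp m2 f2"
    using m by (auto intro!: temp_nonneg f1(1) f2(1))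
  then have X: "0 \<le> temp m1 f1 + (norm (mvel f1))\<^sup>2" "0 \<le> temp m2 f2 + (norm (mvel f2))\<^sup>2"
    by simp_all
  have species: "ereal (dens f1 * (temp m1 f1 + (norm (mvel f1))\<^sup>2) powr e) \<le> ereal C0 * Nq q f1"
      "ereal (dens f2 * (temp m2 f2 + (norm (mvel f2))\<^sup>2) powr e) \<le> ereal C0 * Nq q f2"
    unfolding C0_def e_def using m c
    by (auto intro!: species_energy_bound_Nq[OF f1 _ _ _ q] species_energy_bound_Nq[OF f2 _ _ _ q])
  have Nq: "0 \<le> Nq q f1" "0 \<le> Nq q f2"
    using Nq_ge[of 0 q f1] Nq_ge[of 0 q f2] by (simp_all add: zero_ereal_def)
  have "C0 \<le> (2 * A) powr e * C0"
    using A_ge e C0 by (simp add: ge_one_powr_ge_zero)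
  then show "ereal (dens f1 * (temp m1 f1 + (norm (mvel f1))\<^sup>2) powr e) \<le> ereal ((2 * A) powr e * C0) * Nq q f1"
    "ereal (dens f2 * (temp m2 f2 + (norm (mvel f2))\<^sup>2) powr e) \<le> ereal ((2 * A) powr e * C0) * Nq q f2"
    using species Nq by (auto elim!: order_trans intro: ereal_mult_right_mono)
  note E12 = T12_energy_bounds[OF T \<alpha> \<gamma> A12, of "mvel f1" "mvel f2"]
  show "ereal (dens f1 * (T12 \<alpha> \<gamma> (temp m1 f1) (temp m2 f2) (mvel f1) (mvel f2)
            + (norm (u12 \<delta> (mvel f1) (mvel f2)))\<^sup>2) powr e)
          \<le> ereal ((2 * A) powr e * C0) * (Nq q f1 + ereal (dens f1 / dens f2) * Nq q f2)"
    by (rule ereal_mixture_bound[OF f1(3) f2(3) X E12 A e C0 Nq species])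
  note E21 = T21_energy_bounds[OF T \<alpha> \<epsilon> g[unfolded g_def] A21[unfolded g_def b_def], of "mvel f1" "mvel f2"]
  show "ereal (dens f2 * (T21 m1 m2 \<epsilon> \<delta> \<alpha> \<gamma> (temp m1 f1) (temp m2 f2) (mvel f1) (mvel f2)
            + (norm (u21 m1 m2 \<epsilon> \<delta> (mvel f1) (mvel f2)))\<^sup>2) powr e)
          \<le> ereal ((2 * A) powr e * C0) * (ereal (dens f2 / dens f1) * Nq q f1 + Nq q f2)"
    using ereal_mixture_bound[OF f2(3) f1(3) X(2,1) E21(1) _ A e C0 Nq(2,1) species(2,1)] E21(2)
    by (simp add: add.commute)
qed

theorem mainTheorem2:
  fixes m1 m2 \<epsilon> \<alpha> \<delta> \<gamma> q :: real
  assumes "m1 > 0" and "m2 > 0"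
    and "0 < \<epsilon>" and "\<epsilon> \<le> 1"
    and "0 \<le> \<alpha>" and "\<alpha> \<le> 1"
    and "(m1 / m2 * \<epsilon> - 1) / (1 + m1 / m2 * \<epsilon>) \<le> \<delta>" and "\<delta> \<le> 1"
    and "0 \<le> \<gamma>"
    and "\<gamma> \<le> m1 / real CARD('n::finite) * (1 - \<delta>)
                 * ((1 + m1 / m2 * \<epsilon>) * \<delta> + 1 - m1 / m2 * \<epsilon>)"
    and "q > real CARD('n) + 2"
  shows "\<exists>C > 0. \<forall>f1 f2 :: real^'n \<Rightarrow> real.
     (\<forall>v. f1 v \<ge> 0) \<and> (\<forall>v. f2 v \<ge> 0) \<and>
     integrable lborel (\<lambda>v. (1 + (norm v)\<^sup>2) * f1 v) \<and>
     integrable lborel (\<lambda>v. (1 + (norm v)\<^sup>2) * f2 v) \<and>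
     dens f1 > 0 \<and> dens f2 > 0
     \<longrightarrow>
     (let n1 = dens f1; n2 = dens f2; u1 = mvel f1; u2 = mvel f2;
          T1 = temp m1 f1; T2 = temp m2 f2; e = (q - real CARD('n)) / 2;
          uA = u12 \<delta> u1 u2; uB = u21 m1 m2 \<epsilon> \<delta> u1 u2;
          TA = T12 \<alpha> \<gamma> T1 T2 u1 u2; TB = T21 m1 m2 \<epsilon> \<delta> \<alpha> \<gamma> T1 T2 u1 u2
      in ereal (n1 * (T1 + (norm u1)\<^sup>2) powr e) \<le> ereal C * Nq q f1
       \<and> ereal (n2 * (T2 + (norm u2)\<^sup>2) powr e) \<le> ereal C * Nq q f2
       \<and> ereal (n1 * (TA + (norm uA)\<^sup>2) powr e) \<le> ereal C * (Nq q f1 + ereal (n1 / n2) * Nq q f2)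
       \<and> ereal (n2 * (TB + (norm uB)\<^sup>2) powr e) \<le> ereal C * (ereal (n2 / n1) * Nq q f1 + Nq q f2))"
proof -
  define g where "g = (1 / real CARD('n)) * \<epsilon> * m1 * (1 - \<delta>) * (m1 / m2 * \<epsilon> * (\<delta> - 1) + \<delta> + 1) - \<epsilon> * \<gamma>"
  define b where "b = m1 / m2 * \<epsilon> * (1 - \<delta>)"
  define A where "A = max (1 + 2 * \<gamma> + 2 * \<delta>\<^sup>2 + 2 * (1 - \<delta>)\<^sup>2) (1 + 2 * g + 2 * b\<^sup>2 + 2 * (1 - b)\<^sup>2)"
  define c where "c = max 1 (max (m1 / real CARD('n)) (m2 / real CARD('n)))"
  define e where "e = (q - real CARD('n)) / 2"
  define C where "C = (2 * A) powr e * (c * (1 + dyadic_tail_const q CARD('n))) powr e"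
  have g: "0 \<le> g" unfolding g_def using assms(3,10) by (rule T21_coeff_nonneg)
  have A12: "1 + 2 * \<gamma> + 2 * \<delta>\<^sup>2 + 2 * (1 - \<delta>)\<^sup>2 \<le> A"
    and A21: "1 + 2 * g + 2 * b\<^sup>2 + 2 * (1 - b)\<^sup>2 \<le> A"
    by (simp_all add: A_def)
  have c: "1 \<le> c" "m1 / real CARD('n) \<le> c" "m2 / real CARD('n) \<le> c"
    by (simp_all add: c_def)
  have "0 < A"
    using A12 assms(9) zero_le_power2[of \<delta>] zero_le_power2[of "1 - \<delta>"] by linarith
  then have "0 < C"
    using c dyadic_tail_const_pos[OF assms(11)] by (simp add: C_def)
  then show ?thesis
    unfolding Let_def
    using two_species_energy_bounds[OF _ _ _ _ _ _ assms(1,2) c assms(11,5,6) _ assms(4,9) g[unfolded g_def]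
        A12 A21[unfolded g_def b_def]] assms(3)
    by (intro exI[of _ C]) (auto simp: C_def e_def)
qed

end
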